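(* Let $(f^*,g^* )$ be a stationary $\hat\alpha$-discounted Nash equilibrium of a two-player continuous time stochastic game for some $\hat\alpha>0$, with $\|\mu\|>0$, and suppose: (M1) $(f^*,g^* )$ is pure, i.e. for each $s\in S$ there are $a^1_s\in A^1(s)$, $a^2_s\in A^2(s)$ with $f^*(s,a^1_s)=1$, $g^*(s,a^2_s)=1$; (M2) there exist $p_s\ge0$ with $\sum_{s\in S}p_s=1$ such that $Q(f^*,g^* )_{ss'}=\|\mu\|\,(p_{s'}-\delta(s,s'))$ for all $s,s'\in S$; (M3) for all $s\in S$, $a^1\in A^1(s)$: $\sum_{s'}p_{s'}r^1(s',a^1_{s'},a^2_{s'})\ge\sum_{s'}\left(\frac{\mu(s',s,a^1,a^2_s)}{\|\mu\|}+\delta(s,s')\right)r^1(s',a^1_{s'},a^2_{s'})$, and for all $s\in S$, $a^2\in A^2(s)$: $\sum_{s'}p_{s'}r^2(s',a^1_{s'},a^2_{s'})\ge\sum_{s'}\left(\frac{\mu(s',s,a^1_s,a^2)}{\|\mu\|}+\delta(s,s')\right)r^2(s',a^1_{s'},a^2_{s'})$. Then $(f^*,g^* )$ is a Blackwell-Nash equilibrium.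
   Context: A two-player continuous time stochastic game consists of a finite state set $S$, finite nonempty action sets $A^1(s),A^2(s)$, reward rates $r^i(s,a^1,a^2)$ ($i=1,2$), and transition rates $\mu(s',s,a^1,a^2)\ge0$ from $s$ to $s'\ne s$, with $\mu(s,s,a^1,a^2)=-\sum_{s'\ne s}\mu(s',s,a^1,a^2)$. Let $\|\mu\|=\max_{s,a^1,a^2}\sum_{s'\ne s}\mu(s',s,a^1,a^2)$ and let $\delta(s,s')$ be the Kronecker delta. Stationary strategies $f,g$ assign to each state a probability distribution on $A^1(s)$, resp. $A^2(s)$. For a stationary pair, $r^i(s,f,g)=\sum_{a^1,a^2}f(s,a^1)g(s,a^2)r^i(s,a^1,a^2)$ and $Q(f,g)$ is the generator matrix with $Q(f,g)_{ss'}=\sum_{a^1,a^2}f(s,a^1)g(s,a^2)\mu(s',s,a^1,a^2)$. For $\alpha>0$ the $\alpha$-discounted payoff is $v^i_\alpha(f,g)=(\alpha I-Q(f,g))^{-1}r^i(f,g)$ (equivalently $E^s_{f,g}\int_0^\infty e^{-\alpha t}r^i(s_t,f,g)dt$). A stationary pair $(f^*,g^* )$ is an $\alpha$-discounted Nash equilibrium if for all $s$, $v^1_\alpha(s,f^*,g^* )\ge v^1_\alpha(s,f,g^* )$ for all stationary $f$ and $v^2_\alpha(s,f^*,g^* )\ge v^2_\alpha(s,f^*,g)$ for all stationary $g$. It is a Blackwell-Nash equilibrium (BNE) if there is $\alpha_0>0$ such that it is an $\alpha$-discounted Nash equilibrium for all $\alpha\in(0,\alpha_0]$. *)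

theory Defs
  imports "HOL-Analysis.Analysis"
begin

text \<open>Two-player continuous time stochastic game. States: a finite type 's.
 Action sets A1 s, A2 s. Rewards r s a1 a2. Transition rates mu s' s a1 a2
 (rate from s to s').\<close>

definition ctsg :: "('s::finite \<Rightarrow> 'a1 set) \<Rightarrow> ('s \<Rightarrow> 'a2 set)
   \<Rightarrow> ('s \<Rightarrow> 's \<Rightarrow> 'a1 \<Rightarrow> 'a2 \<Rightarrow> real) \<Rightarrow> bool" where
  "ctsg A1 A2 mu \<longleftrightarrow>
     (\<forall>s. finite (A1 s) \<and> A1 s \<noteq> {} \<and> finite (A2 s) \<and> A2 s \<noteq> {}) \<and>
     (\<forall>s s' a1 a2. a1 \<in> A1 s \<longrightarrow> a2 \<in> A2 s \<longrightarrow> s' \<noteq> s \<longrightarrow> mu s' s a1 a2 \<ge> 0) \<and>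
     (\<forall>s a1 a2. a1 \<in> A1 s \<longrightarrow> a2 \<in> A2 s \<longrightarrow>
        mu s s a1 a2 = - (\<Sum>s'\<in>UNIV - {s}. mu s' s a1 a2))"

definition mu_norm :: "('s::finite \<Rightarrow> 'a1 set) \<Rightarrow> ('s \<Rightarrow> 'a2 set)
   \<Rightarrow> ('s \<Rightarrow> 's \<Rightarrow> 'a1 \<Rightarrow> 'a2 \<Rightarrow> real) \<Rightarrow> real" where
  "mu_norm A1 A2 mu = Max {(\<Sum>s'\<in>UNIV - {s}. mu s' s a1 a2) | s a1 a2. a1 \<in> A1 s \<and> a2 \<in> A2 s}"

definition stationary :: "('s \<Rightarrow> 'a set) \<Rightarrow> ('s \<Rightarrow> 'a \<Rightarrow> real) \<Rightarrow> bool" where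
  "stationary A f \<longleftrightarrow> (\<forall>s. (\<forall>a\<in>A s. f s a \<ge> 0) \<and> (\<Sum>a\<in>A s. f s a) = 1)"

definition rew :: "('s::finite \<Rightarrow> 'a1 set) \<Rightarrow> ('s \<Rightarrow> 'a2 set)
   \<Rightarrow> ('s \<Rightarrow> 'a1 \<Rightarrow> 'a2 \<Rightarrow> real) \<Rightarrow> ('s \<Rightarrow> 'a1 \<Rightarrow> real) \<Rightarrow> ('s \<Rightarrow> 'a2 \<Rightarrow> real) \<Rightarrow> real^'s" where
  "rew A1 A2 r f g = (\<chi> s. \<Sum>a1\<in>A1 s. \<Sum>a2\<in>A2 s. f s a1 * g s a2 * r s a1 a2)"

definition genQ :: "('s::finite \<Rightarrow> 'a1 set) \<Rightarrow> ('s \<Rightarrow> 'a2 set)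
   \<Rightarrow> ('s \<Rightarrow> 's \<Rightarrow> 'a1 \<Rightarrow> 'a2 \<Rightarrow> real) \<Rightarrow> ('s \<Rightarrow> 'a1 \<Rightarrow> real) \<Rightarrow> ('s \<Rightarrow> 'a2 \<Rightarrow> real) \<Rightarrow> real^'s^'s" where
  "genQ A1 A2 mu f g = (\<chi> s s'. \<Sum>a1\<in>A1 s. \<Sum>a2\<in>A2 s. f s a1 * g s a2 * mu s' s a1 a2)"

definition disc_payoff :: "('s::finite \<Rightarrow> 'a1 set) \<Rightarrow> ('s \<Rightarrow> 'a2 set)
   \<Rightarrow> ('s \<Rightarrow> 's \<Rightarrow> 'a1 \<Rightarrow> 'a2 \<Rightarrow> real) \<Rightarrow> ('s \<Rightarrow> 'a1 \<Rightarrow> 'a2 \<Rightarrow> real) \<Rightarrow> real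
   \<Rightarrow> ('s \<Rightarrow> 'a1 \<Rightarrow> real) \<Rightarrow> ('s \<Rightarrow> 'a2 \<Rightarrow> real) \<Rightarrow> real^'s" where
  "disc_payoff A1 A2 mu r \<alpha> f g =
     matrix_inv (\<alpha> *\<^sub>R mat 1 - genQ A1 A2 mu f g) *v rew A1 A2 r f g"

definition disc_NE :: "('s::finite \<Rightarrow> 'a1 set) \<Rightarrow> ('s \<Rightarrow> 'a2 set)
   \<Rightarrow> ('s \<Rightarrow> 's \<Rightarrow> 'a1 \<Rightarrow> 'a2 \<Rightarrow> real) \<Rightarrow> ('s \<Rightarrow> 'a1 \<Rightarrow> 'a2 \<Rightarrow> real) \<Rightarrow> ('s \<Rightarrow> 'a1 \<Rightarrow> 'a2 \<Rightarrow> real)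
   \<Rightarrow> real \<Rightarrow> ('s \<Rightarrow> 'a1 \<Rightarrow> real) \<Rightarrow> ('s \<Rightarrow> 'a2 \<Rightarrow> real) \<Rightarrow> bool" where
  "disc_NE A1 A2 mu r1 r2 \<alpha> fs gs \<longleftrightarrow>
     stationary A1 fs \<and> stationary A2 gs \<and>
     (\<forall>s. (\<forall>f. stationary A1 f \<longrightarrow>
              disc_payoff A1 A2 mu r1 \<alpha> fs gs $ s \<ge> disc_payoff A1 A2 mu r1 \<alpha> f gs $ s) \<and>
          (\<forall>g. stationary A2 g \<longrightarrow>
              disc_payoff A1 A2 mu r2 \<alpha> fs gs $ s \<ge> disc_payoff A1 A2 mu r2 \<alpha> fs g $ s))"

definition blackwell_NE :: "('s::finite \<Rightarrow> 'a1 set) \<Rightarrow> ('s \<Rightarrow> 'a2 set)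
   \<Rightarrow> ('s \<Rightarrow> 's \<Rightarrow> 'a1 \<Rightarrow> 'a2 \<Rightarrow> real) \<Rightarrow> ('s \<Rightarrow> 'a1 \<Rightarrow> 'a2 \<Rightarrow> real) \<Rightarrow> ('s \<Rightarrow> 'a1 \<Rightarrow> 'a2 \<Rightarrow> real)
   \<Rightarrow> ('s \<Rightarrow> 'a1 \<Rightarrow> real) \<Rightarrow> ('s \<Rightarrow> 'a2 \<Rightarrow> real) \<Rightarrow> bool" where
  "blackwell_NE A1 A2 mu r1 r2 fs gs \<longleftrightarrow>
     (\<exists>\<alpha>0>0. \<forall>\<alpha>. 0 < \<alpha> \<and> \<alpha> \<le> \<alpha>0 \<longrightarrow> disc_NE A1 A2 mu r1 r2 \<alpha> fs gs)"

end

theory Submission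
  imports Defs
begin

text \<open>Write m = mu_norm, R t for the reward of the pure profile at t and g = \<Sum>t. p t * R t.
  By (M2) the chain of the profile jumps at rate m to a state drawn from p, so its
  discounted payoff has the closed form v \<alpha> t = (R t + (m / \<alpha>) g) / (\<alpha> + m).
  With the opponent's strategy fixed, a strategy is a best response iff no action has a negative
  Bellman residual against its own payoff. For the profile, the residual of action b at t is
  R t - r t b + D t b / (\<alpha> + m), where D t b \<ge> 0 is exactly (M3). So residuals only grow as
  \<alpha> decreases, and an equilibrium for \<alpha>h stays one for every \<alpha> in (0, \<alpha>h].
  Player 2 is handled by exchanging the roles of the players.\<close>

definition generator_matrix :: "real^'n::finite^'n \<Rightarrow> bool" where
  "generator_matrix Q \<longleftrightarrow>
     (\<forall>i j. i \<noteq> j \<longrightarrow> 0 \<le> Q$i$j) \<and> (\<forall>i. (\<Sum>j\<in>UNIV. Q$i$j) = 0)"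

lemma resolvent_mult_nth:
  fixes Q :: "real^'n::finite^'n"
  shows "((\<alpha> *\<^sub>R mat 1 - Q) *v x) $ i = \<alpha> * x$i - (\<Sum>j\<in>UNIV. Q$i$j * x$j)"
proof -
  have "((\<alpha> *\<^sub>R mat 1 - Q) *v x) $ i
      = (\<Sum>j\<in>UNIV. (if i = j then \<alpha> * x$j else 0) - Q$i$j * x$j)"
    by (auto simp: matrix_vector_mult_def mat_def left_diff_distrib intro!: sum.cong)
  then show ?thesis
    by (simp add: sum_subtractf)
qed

lemma generator_resolvent_nonneg:
  fixes Q :: "real^'n::finite^'n"
  assumes "0 < \<alpha>" and Q: "generator_matrix Q"
    and nonneg: "\<And>i. 0 \<le> ((\<alpha> *\<^sub>R mat 1 - Q) *v x) $ i"
  shows "0 \<le> x $ i"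
proof -
  define k where "k = arg_min_on (\<lambda>j. x$j) UNIV"
  have min: "x$k \<le> x$j" for j
    unfolding k_def by (rule arg_min_least) auto
  text \<open>At a minimal coordinate the generator term is nonnegative, since the row sums vanish.\<close>
  have "(\<Sum>j\<in>UNIV. Q$k$j * x$j) = (\<Sum>j\<in>UNIV. Q$k$j * (x$j - x$k))"
    using Q by (simp add: right_diff_distrib sum_subtractf sum_distrib_right[symmetric] generator_matrix_def)
  also have "\<dots> \<ge> 0"
    using Q min unfolding generator_matrix_def
    by (intro sum_nonneg) (metis diff_self diff_ge_0_iff_ge mult_nonneg_nonneg mult_zero_right)
  finally have "0 \<le> \<alpha> * x$k"
    using nonneg[of k] by (simp add: resolvent_mult_nth)
  then have "0 \<le> x$k"
    using \<open>0 < \<alpha>\<close> by (simp add: zero_le_mult_iff)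
  then show ?thesis
    using min[of i] by linarith
qed

lemma generator_resolvent_mono:
  fixes Q :: "real^'n::finite^'n"
  assumes "0 < \<alpha>" and "generator_matrix Q"
    and "\<And>i. ((\<alpha> *\<^sub>R mat 1 - Q) *v y) $ i \<le> ((\<alpha> *\<^sub>R mat 1 - Q) *v x) $ i"
  shows "y $ i \<le> x $ i"
  using generator_resolvent_nonneg[OF assms(1,2), of "x - y"] assms(3)
  by (simp add: matrix_vector_mult_diff_distrib)

lemma generator_resolvent_invertible:
  fixes Q :: "real^'n::finite^'n"
  assumes "0 < \<alpha>" and "generator_matrix Q"
  shows "invertible (\<alpha> *\<^sub>R mat 1 - Q)"
  unfolding invertible_left_inverse matrix_left_invertible_ker
proof (intro allI impI)
  fix x :: "real^'n"
  assume "(\<alpha> *\<^sub>R mat 1 - Q) *v x = 0"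
  then have "x$i \<le> 0" and "0 \<le> x$i" for i
    using generator_resolvent_mono[OF assms, of x 0] generator_resolvent_mono[OF assms, of 0 x]
    by simp_all
  then show "x = 0"
    by (simp add: vec_eq_iff order_antisym)
qed

lemma matrix_inv_inverse:
  fixes M :: "'a::field^'n::finite^'n"
  assumes "invertible M"
  shows "M ** matrix_inv M = mat 1" and "matrix_inv M ** M = mat 1"
  using someI_ex[OF assms[unfolded invertible_def]] unfolding matrix_inv_def by auto

lemma mult_matrix_inv_vector:
  fixes M :: "'a::field^'n::finite^'n"
  assumes "invertible M"
  shows "M *v (matrix_inv M *v y) = y"
  by (simp add: matrix_vector_mul_assoc matrix_inv_inverse[OF assms])

lemma matrix_inv_vector_eqI:
  fixes M :: "'a::field^'n::finite^'n"
  assumes "invertible M" and "M *v x = y"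
  shows "matrix_inv M *v y = x"
  using assms(2) by (metis matrix_vector_mul_assoc matrix_vector_mul_lid matrix_inv_inverse(2)[OF assms(1)])

lemma generator_resolvent_inv_le:
  fixes Q :: "real^'n::finite^'n"
  assumes "0 < \<alpha>" and "generator_matrix Q"
    and "\<And>i. y $ i \<le> ((\<alpha> *\<^sub>R mat 1 - Q) *v x) $ i"
  shows "(matrix_inv (\<alpha> *\<^sub>R mat 1 - Q) *v y) $ i \<le> x $ i"
  by (rule generator_resolvent_mono[OF assms(1,2)])
    (simp add: mult_matrix_inv_vector[OF generator_resolvent_invertible[OF assms(1,2)]] assms(3))

lemma ctsg_finite_actions:
  "ctsg A1 A2 mu \<Longrightarrow> finite (A1 s) \<and> finite (A2 s)"
  unfolding ctsg_def by simp

lemma ctsg_rate_sum_zero: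
  assumes "ctsg A1 A2 mu" and "a1 \<in> A1 s" and "a2 \<in> A2 s"
  shows "(\<Sum>s'\<in>UNIV. mu s' s a1 a2) = 0"
proof -
  have "(\<Sum>s'\<in>UNIV. mu s' s a1 a2) = mu s s a1 a2 + (\<Sum>s'\<in>UNIV - {s}. mu s' s a1 a2)"
    by (rule sum.remove) auto
  then show ?thesis
    using assms unfolding ctsg_def by simp
qed

lemma genQ_generator_matrix:
  fixes A1 :: "'s::finite \<Rightarrow> 'a1 set"
  assumes game: "ctsg A1 A2 mu" and f: "stationary A1 f" and g: "stationary A2 g"
  shows "generator_matrix (genQ A1 A2 mu f g)"
  unfolding generator_matrix_def
proof (intro conjI allI impI)
  fix s s' :: 's
  assume "s \<noteq> s'"
  then have "\<forall>a1\<in>A1 s. \<forall>a2\<in>A2 s. 0 \<le> f s a1 * g s a2 * mu s' s a1 a2"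
    using game f g unfolding ctsg_def stationary_def by (metis mult_nonneg_nonneg)
  then show "0 \<le> genQ A1 A2 mu f g $ s $ s'"
    unfolding genQ_def by (simp add: sum_nonneg)
next
  fix s :: 's
  have "(\<Sum>s'\<in>UNIV. genQ A1 A2 mu f g $ s $ s')
      = (\<Sum>s'\<in>UNIV. \<Sum>a1\<in>A1 s. \<Sum>a2\<in>A2 s. f s a1 * g s a2 * mu s' s a1 a2)"
    unfolding genQ_def by simp
  also have "\<dots> = (\<Sum>a1\<in>A1 s. \<Sum>a2\<in>A2 s. \<Sum>s'\<in>UNIV. f s a1 * g s a2 * mu s' s a1 a2)"
    by (subst sum.swap) (rule sum.cong[OF refl], rule sum.swap)
  also have "\<dots> = (\<Sum>a1\<in>A1 s. \<Sum>a2\<in>A2 s. f s a1 * g s a2 * (\<Sum>s'\<in>UNIV. mu s' s a1 a2))"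
    by (simp add: sum_distrib_left)
  also have "\<dots> = 0"
    using ctsg_rate_sum_zero[OF game] by simp
  finally show "(\<Sum>s'\<in>UNIV. genQ A1 A2 mu f g $ s $ s') = 0" .
qed

lemma stationary_pure_sum:
  assumes f: "stationary A f" and "finite (A s)" and "a \<in> A s" and "f s a = 1"
  shows "(\<Sum>b\<in>A s. f s b * h b) = h a"
proof -
  have "(\<Sum>b\<in>A s. f s b) = f s a + (\<Sum>b\<in>A s - {a}. f s b)"
    by (rule sum.remove) fact+
  then have "(\<Sum>b\<in>A s - {a}. f s b) = 0"
    using f \<open>f s a = 1\<close> unfolding stationary_def by simp
  then have "\<forall>b\<in>A s - {a}. f s b = 0"
    using f \<open>finite (A s)\<close> sum_nonneg_eq_0_iff[of "A s - {a}" "f s"]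
    unfolding stationary_def by blast
  moreover have "(\<Sum>b\<in>A s. f s b * h b) = f s a * h a + (\<Sum>b\<in>A s - {a}. f s b * h b)"
    by (rule sum.remove) fact+
  ultimately show ?thesis
    using \<open>f s a = 1\<close> by simp
qed

lemma stationary_pure_update:
  assumes "stationary A f" and "finite (A s)" and "a \<in> A s"
  shows "stationary A (f(s := (\<lambda>b. if b = a then 1 else 0)))"
  using assms unfolding stationary_def by auto

lemma ctsg_swap:
  "ctsg A2 A1 (\<lambda>s' s b a. mu s' s a b) = ctsg A1 A2 mu"
  unfolding ctsg_def by (intro iffI; elim conjE; intro conjI allI impI; simp)

lemma mu_norm_swap:
  "mu_norm A2 A1 (\<lambda>s' s b a. mu s' s a b) = mu_norm A1 A2 mu"
  unfolding mu_norm_def by (rule arg_cong[where f = Max]) auto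

lemma genQ_swap:
  "genQ A2 A1 (\<lambda>s' s b a. mu s' s a b) g f = genQ A1 A2 mu f g"
proof -
  have "(\<Sum>a2\<in>A2 s. \<Sum>a1\<in>A1 s. g s a2 * f s a1 * mu s' s a1 a2)
      = (\<Sum>a1\<in>A1 s. \<Sum>a2\<in>A2 s. f s a1 * g s a2 * mu s' s a1 a2)" for s s'
    by (subst sum.swap) (simp add: mult_ac)
  then show ?thesis
    unfolding genQ_def vec_eq_iff by simp
qed

lemma rew_swap:
  "rew A2 A1 (\<lambda>s b a. r s a b) g f = rew A1 A2 r f g"
proof -
  have "(\<Sum>a2\<in>A2 s. \<Sum>a1\<in>A1 s. g s a2 * f s a1 * r s a1 a2)
      = (\<Sum>a1\<in>A1 s. \<Sum>a2\<in>A2 s. f s a1 * g s a2 * r s a1 a2)" for s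
    by (subst sum.swap) (simp add: mult_ac)
  then show ?thesis
    unfolding rew_def vec_eq_iff by simp
qed

lemma disc_payoff_swap:
  "disc_payoff A2 A1 (\<lambda>s' s b a. mu s' s a b) (\<lambda>s b a. r s a b) \<alpha> g f = disc_payoff A1 A2 mu r \<alpha> f g"
  unfolding disc_payoff_def genQ_swap[of A2 A1 mu] rew_swap[of A2 A1 r] ..

definition best_response :: "('s::finite \<Rightarrow> 'a1 set) \<Rightarrow> ('s \<Rightarrow> 'a2 set)
   \<Rightarrow> ('s \<Rightarrow> 's \<Rightarrow> 'a1 \<Rightarrow> 'a2 \<Rightarrow> real) \<Rightarrow> ('s \<Rightarrow> 'a1 \<Rightarrow> 'a2 \<Rightarrow> real) \<Rightarrow> real
   \<Rightarrow> ('s \<Rightarrow> 'a1 \<Rightarrow> real) \<Rightarrow> ('s \<Rightarrow> 'a2 \<Rightarrow> real) \<Rightarrow> bool" where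
  "best_response A1 A2 mu r \<alpha> fs gs \<longleftrightarrow>
     (\<forall>f s. stationary A1 f \<longrightarrow>
        disc_payoff A1 A2 mu r \<alpha> f gs $ s \<le> disc_payoff A1 A2 mu r \<alpha> fs gs $ s)"

lemma disc_NE_iff_best_responses:
  "disc_NE A1 A2 mu r1 r2 \<alpha> fs gs \<longleftrightarrow>
     stationary A1 fs \<and> stationary A2 gs \<and>
     best_response A1 A2 mu r1 \<alpha> fs gs \<and>
     best_response A2 A1 (\<lambda>s' s b a. mu s' s a b) (\<lambda>s b a. r2 s a b) \<alpha> gs fs"
  unfolding disc_NE_def best_response_def disc_payoff_swap[of A2 A1 mu r2] by blast

text \<open>Against a fixed stationary gs, player 1 faces a continuous time Markov decision problem;
  a negative Bellman residual of b at t means that switching to b at t improves on the value u.\<close>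

locale fixed_opponent =
  fixes A1 :: "'s::finite \<Rightarrow> 'a1 set" and A2 :: "'s \<Rightarrow> 'a2 set"
    and mu :: "'s \<Rightarrow> 's \<Rightarrow> 'a1 \<Rightarrow> 'a2 \<Rightarrow> real" and r :: "'s \<Rightarrow> 'a1 \<Rightarrow> 'a2 \<Rightarrow> real"
    and gs :: "'s \<Rightarrow> 'a2 \<Rightarrow> real"
  assumes game: "ctsg A1 A2 mu" and gs_stationary: "stationary A2 gs"
begin

definition bellman_residual :: "real \<Rightarrow> real^'s \<Rightarrow> 's \<Rightarrow> 'a1 \<Rightarrow> real" where
  "bellman_residual \<alpha> u t b =
     \<alpha> * u$t - (\<Sum>s'\<in>UNIV. (\<Sum>c\<in>A2 t. gs t c * mu s' t b c) * u$s') - (\<Sum>c\<in>A2 t. gs t c * r t b c)"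

abbreviation payoff :: "real \<Rightarrow> ('s \<Rightarrow> 'a1 \<Rightarrow> real) \<Rightarrow> real^'s" where
  "payoff \<alpha> f \<equiv> disc_payoff A1 A2 mu r \<alpha> f gs"

lemma resolvent_minus_rew:
  assumes f: "stationary A1 f"
  shows "((\<alpha> *\<^sub>R mat 1 - genQ A1 A2 mu f gs) *v u) $ t - rew A1 A2 r f gs $ t
       = (\<Sum>b\<in>A1 t. f t b * bellman_residual \<alpha> u t b)"
proof -
  have "(\<Sum>s'\<in>UNIV. genQ A1 A2 mu f gs $ t $ s' * u$s')
      = (\<Sum>s'\<in>UNIV. \<Sum>b\<in>A1 t. f t b * ((\<Sum>c\<in>A2 t. gs t c * mu s' t b c) * u$s'))"
    unfolding genQ_def by (simp add: sum_distrib_left sum_distrib_right mult.assoc)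
  also have "\<dots> = (\<Sum>b\<in>A1 t. f t b * (\<Sum>s'\<in>UNIV. (\<Sum>c\<in>A2 t. gs t c * mu s' t b c) * u$s'))"
    unfolding sum_distrib_left by (rule sum.swap)
  finally have Qu: "(\<Sum>s'\<in>UNIV. genQ A1 A2 mu f gs $ t $ s' * u$s') = \<dots>" .
  have rw: "rew A1 A2 r f gs $ t = (\<Sum>b\<in>A1 t. f t b * (\<Sum>c\<in>A2 t. gs t c * r t b c))"
    unfolding rew_def by (simp add: sum_distrib_left mult.assoc)
  have "(\<Sum>b\<in>A1 t. f t b) = 1"
    using f by (simp add: stationary_def)
  then have avg: "(\<Sum>b\<in>A1 t. f t b * (\<alpha> * u$t)) = \<alpha> * u$t"
    by (simp add: sum_distrib_right[symmetric])
  show ?thesis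
    unfolding resolvent_mult_nth Qu rw bellman_residual_def
    by (simp only: right_diff_distrib sum_subtractf avg)
qed

lemma resolvent_payoff:
  assumes "0 < \<alpha>" and f: "stationary A1 f"
  shows "(\<alpha> *\<^sub>R mat 1 - genQ A1 A2 mu f gs) *v payoff \<alpha> f = rew A1 A2 r f gs"
  unfolding disc_payoff_def
  by (rule mult_matrix_inv_vector[OF generator_resolvent_invertible[OF \<open>0 < \<alpha>\<close>]])
    (rule genQ_generator_matrix[OF game f gs_stationary])

lemma bellman_residual_average:
  assumes "0 < \<alpha>" and f: "stationary A1 f"
  shows "(\<Sum>b\<in>A1 t. f t b * bellman_residual \<alpha> (payoff \<alpha> f) t b) = 0"
  using resolvent_minus_rew[OF f, of \<alpha> "payoff \<alpha> f" t] resolvent_payoff[OF assms] by simp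

text \<open>Policy improvement: a negative residual at (s0, a) makes the strategy that switches to a
  at s0 strictly better at s0.\<close>

theorem best_response_iff_residual_nonneg:
  assumes "0 < \<alpha>" and fs: "stationary A1 fs"
  shows "best_response A1 A2 mu r \<alpha> fs gs \<longleftrightarrow>
           (\<forall>t. \<forall>b\<in>A1 t. 0 \<le> bellman_residual \<alpha> (payoff \<alpha> fs) t b)"
proof
  assume br: "best_response A1 A2 mu r \<alpha> fs gs"
  show "\<forall>t. \<forall>b\<in>A1 t. 0 \<le> bellman_residual \<alpha> (payoff \<alpha> fs) t b"
  proof (intro allI ballI, rule ccontr)
    fix s0 a
    assume a: "a \<in> A1 s0" and neg: "\<not> 0 \<le> bellman_residual \<alpha> (payoff \<alpha> fs) s0 a"
    define f where "f = fs(s0 := (\<lambda>b. if b = a then 1 else 0))"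
    have fin: "finite (A1 s0)"
      using ctsg_finite_actions[OF game] by blast
    have f: "stationary A1 f"
      unfolding f_def using fs fin a by (rule stationary_pure_update)
    let ?M = "\<alpha> *\<^sub>R mat 1 - genQ A1 A2 mu f gs"
    have defect: "(?M *v payoff \<alpha> fs) $ t - rew A1 A2 r f gs $ t
        = (if t = s0 then bellman_residual \<alpha> (payoff \<alpha> fs) s0 a else 0)" for t
    proof (cases "t = s0")
      case True
      have "(\<Sum>b\<in>A1 s0. f s0 b * bellman_residual \<alpha> (payoff \<alpha> fs) s0 b)
          = (\<Sum>b\<in>A1 s0. if b = a then bellman_residual \<alpha> (payoff \<alpha> fs) s0 b else 0)"
        by (rule sum.cong) (auto simp: f_def)
      then show ?thesis
        using True a fin by (simp add: resolvent_minus_rew[OF f])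
    next
      case False
      then have "(\<Sum>b\<in>A1 t. f t b * bellman_residual \<alpha> (payoff \<alpha> fs) t b) = 0"
        using bellman_residual_average[OF \<open>0 < \<alpha>\<close> fs, of t] by (simp add: f_def)
      then show ?thesis
        using False by (simp add: resolvent_minus_rew[OF f])
    qed
    have "(?M *v payoff \<alpha> fs) $ t \<le> (?M *v payoff \<alpha> f) $ t" for t
      using defect[of t] neg by (simp add: resolvent_payoff[OF \<open>0 < \<alpha>\<close> f] split: if_splits)
    then have "payoff \<alpha> fs $ t \<le> payoff \<alpha> f $ t" for t
      by (rule generator_resolvent_mono[OF \<open>0 < \<alpha>\<close> genQ_generator_matrix[OF game f gs_stationary]])
    moreover have "payoff \<alpha> f $ t \<le> payoff \<alpha> fs $ t" for t
      using br f unfolding best_response_def by blast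
    ultimately have "payoff \<alpha> f = payoff \<alpha> fs"
      by (simp add: vec_eq_iff order_antisym)
    then show False
      using defect[of s0] neg resolvent_payoff[OF \<open>0 < \<alpha>\<close> f] by simp
  qed
next
  assume residual: "\<forall>t. \<forall>b\<in>A1 t. 0 \<le> bellman_residual \<alpha> (payoff \<alpha> fs) t b"
  show "best_response A1 A2 mu r \<alpha> fs gs"
    unfolding best_response_def
  proof (intro allI impI)
    fix f s
    assume f: "stationary A1 f"
    have "rew A1 A2 r f gs $ t \<le> ((\<alpha> *\<^sub>R mat 1 - genQ A1 A2 mu f gs) *v payoff \<alpha> fs) $ t" for t
    proof -
      have "0 \<le> (\<Sum>b\<in>A1 t. f t b * bellman_residual \<alpha> (payoff \<alpha> fs) t b)"
        using residual f unfolding stationary_def by (intro sum_nonneg mult_nonneg_nonneg) auto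
      then show ?thesis
        using resolvent_minus_rew[OF f, of \<alpha> "payoff \<alpha> fs" t] by simp
    qed
    then show "payoff \<alpha> f $ s \<le> payoff \<alpha> fs $ s"
      unfolding disc_payoff_def[of _ _ _ _ _ f]
      by (rule generator_resolvent_inv_le[OF \<open>0 < \<alpha>\<close> genQ_generator_matrix[OF game f gs_stationary]])
  qed
qed

end

locale pure_restart_profile = fixed_opponent A1 A2 mu r gs
  for A1 :: "'s::finite \<Rightarrow> 'a1 set" and A2 :: "'s \<Rightarrow> 'a2 set" and mu r gs +
  fixes fs :: "'s \<Rightarrow> 'a1 \<Rightarrow> real" and a1s :: "'s \<Rightarrow> 'a1" and a2s :: "'s \<Rightarrow> 'a2"
    and p :: "'s \<Rightarrow> real"
  assumes norm_pos: "0 < mu_norm A1 A2 mu"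
    and fs_stationary: "stationary A1 fs"
    and pure: "\<And>s. a1s s \<in> A1 s \<and> a2s s \<in> A2 s \<and> fs s (a1s s) = 1 \<and> gs s (a2s s) = 1"
    and p_sum: "(\<Sum>s\<in>UNIV. p s) = 1"
    and restart: "\<And>s s'. genQ A1 A2 mu fs gs $ s $ s' =
                    mu_norm A1 A2 mu * (p s' - (if s = s' then 1 else 0))"
    and deviation_bound: "\<And>s a. a \<in> A1 s \<Longrightarrow>
       (\<Sum>s'\<in>UNIV. (mu s' s a (a2s s) / mu_norm A1 A2 mu + (if s = s' then 1 else 0))
                      * r s' (a1s s') (a2s s'))
       \<le> (\<Sum>s'\<in>UNIV. p s' * r s' (a1s s') (a2s s'))"
begin

abbreviation rate :: real where
  "rate \<equiv> mu_norm A1 A2 mu"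

definition profile_reward :: "'s \<Rightarrow> real" where
  "profile_reward t = r t (a1s t) (a2s t)"

definition gain :: real where
  "gain = (\<Sum>t\<in>UNIV. p t * profile_reward t)"

text \<open>Condition (M3) for action b at t, multiplied by mu_norm, says that slack t b \<ge> 0.\<close>

definition slack :: "'s \<Rightarrow> 'a1 \<Rightarrow> real" where
  "slack t b = rate * gain - (\<Sum>s'\<in>UNIV. mu s' t b (a2s t) * profile_reward s') - rate * profile_reward t"

lemma gs_pure_sum: "(\<Sum>c\<in>A2 t. gs t c * h c) = h (a2s t)"
  using ctsg_finite_actions[OF game] pure by (intro stationary_pure_sum[OF gs_stationary]) auto

lemma fs_pure_sum: "(\<Sum>b\<in>A1 t. fs t b * h b) = h (a1s t)"
  using ctsg_finite_actions[OF game] pure by (intro stationary_pure_sum[OF fs_stationary]) auto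

lemma bellman_residual_pure:
  "bellman_residual \<alpha> u t b = \<alpha> * u$t - (\<Sum>s'\<in>UNIV. mu s' t b (a2s t) * u$s') - r t b (a2s t)"
  unfolding bellman_residual_def gs_pure_sum ..

lemma rew_profile: "rew A1 A2 r fs gs $ t = profile_reward t"
proof -
  have "rew A1 A2 r fs gs $ t = (\<Sum>b\<in>A1 t. fs t b * (\<Sum>c\<in>A2 t. gs t c * r t b c))"
    unfolding rew_def by (simp add: sum_distrib_left mult.assoc)
  then show ?thesis
    unfolding gs_pure_sum fs_pure_sum profile_reward_def .
qed

lemma genQ_profile_mult:
  "(\<Sum>j\<in>UNIV. genQ A1 A2 mu fs gs $ t $ j * x$j) = rate * (\<Sum>j\<in>UNIV. p j * x$j) - rate * x$t"
proof -
  have "(\<Sum>j\<in>UNIV. genQ A1 A2 mu fs gs $ t $ j * x$j)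
      = (\<Sum>j\<in>UNIV. rate * (p j * x$j) - (if t = j then rate * x$j else 0))"
    by (rule sum.cong) (auto simp: restart algebra_simps)
  then show ?thesis
    by (simp add: sum_subtractf sum_distrib_left)
qed

lemma payoff_closed_form:
  assumes "0 < \<alpha>"
  shows "payoff \<alpha> fs = (\<chi> t. (profile_reward t + rate / \<alpha> * gain) / (\<alpha> + rate))"
    (is "_ = ?u")
proof -
  have pos: "0 < \<alpha> + rate"
    using assms norm_pos by simp
  have nz: "\<alpha> * \<alpha> + \<alpha> * rate \<noteq> 0"
    using mult_pos_pos[OF assms(1) pos] by (simp add: algebra_simps)
  have "(\<Sum>j\<in>UNIV. p j * ?u $ j)
      = (\<Sum>j\<in>UNIV. p j * profile_reward j + p j * (rate / \<alpha> * gain)) / (\<alpha> + rate)"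
    by (simp add: sum_divide_distrib distrib_left)
  also have "\<dots> = (gain + (\<Sum>j\<in>UNIV. p j) * (rate / \<alpha> * gain)) / (\<alpha> + rate)"
    by (simp only: sum.distrib gain_def sum_distrib_right)
  also have "\<dots> = gain / \<alpha>"
    using assms pos nz by (simp add: p_sum field_simps)
  finally have average: "(\<Sum>j\<in>UNIV. p j * ?u $ j) = gain / \<alpha>" .
  have "(\<alpha> *\<^sub>R mat 1 - genQ A1 A2 mu fs gs) *v ?u = rew A1 A2 r fs gs"
  proof (subst vec_eq_iff, intro allI)
    fix t
    define x where "x = ?u $ t"
    have "\<alpha> * x + rate * x = profile_reward t + rate * (gain / \<alpha>)"
      using pos unfolding x_def distrib_right[symmetric] by simp
    then have "\<alpha> * ?u $ t - rate * (gain / \<alpha>) + rate * ?u $ t = profile_reward t"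
      unfolding x_def[symmetric] by linarith
    then show "((\<alpha> *\<^sub>R mat 1 - genQ A1 A2 mu fs gs) *v ?u) $ t = rew A1 A2 r fs gs $ t"
      unfolding resolvent_mult_nth genQ_profile_mult average rew_profile by simp
  qed
  then show ?thesis
    unfolding disc_payoff_def
    by (rule matrix_inv_vector_eqI[OF generator_resolvent_invertible[OF assms
          genQ_generator_matrix[OF game fs_stationary gs_stationary]]])
qed

lemma bellman_residual_payoff:
  assumes "0 < \<alpha>" and b: "b \<in> A1 t"
  shows "bellman_residual \<alpha> (payoff \<alpha> fs) t b
       = profile_reward t - r t b (a2s t) + slack t b / (\<alpha> + rate)"
proof -
  have pos: "0 < \<alpha> + rate"
    using assms norm_pos by simp
  have nz: "\<alpha> * \<alpha> + \<alpha> * rate \<noteq> 0"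
    using mult_pos_pos[OF assms(1) pos] by (simp add: algebra_simps)
  have "(\<Sum>s'\<in>UNIV. mu s' t b (a2s t)) = 0"
    using ctsg_rate_sum_zero[OF game b] pure by blast
  then have "(\<Sum>s'\<in>UNIV. mu s' t b (a2s t) * payoff \<alpha> fs $ s')
      = (\<Sum>s'\<in>UNIV. mu s' t b (a2s t) * profile_reward s') / (\<alpha> + rate)"
    by (simp add: payoff_closed_form[OF assms(1)] add_divide_distrib distrib_left sum.distrib
        sum_divide_distrib[symmetric] sum_distrib_right[symmetric])
  moreover have "\<alpha> * payoff \<alpha> fs $ t = (\<alpha> * profile_reward t + rate * gain) / (\<alpha> + rate)"
    using assms pos nz by (simp add: payoff_closed_form field_simps)
  ultimately show ?thesis
    using pos unfolding bellman_residual_pure slack_def by (simp add: field_simps)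
qed

lemma slack_nonneg:
  assumes b: "b \<in> A1 t"
  shows "0 \<le> slack t b"
proof -
  have "(\<Sum>s'\<in>UNIV. (if t = s' then 1 else 0) * profile_reward s')
      = (\<Sum>s'\<in>UNIV. if t = s' then profile_reward s' else 0)"
    by (rule sum.cong) auto
  then have "(\<Sum>s'\<in>UNIV. (mu s' t b (a2s t) / rate + (if t = s' then 1 else 0)) * profile_reward s')
      = (\<Sum>s'\<in>UNIV. mu s' t b (a2s t) * profile_reward s') / rate + profile_reward t"
    by (simp add: distrib_right sum.distrib sum_divide_distrib)
  then have "(\<Sum>s'\<in>UNIV. mu s' t b (a2s t) * profile_reward s') / rate + profile_reward t \<le> gain"
    using deviation_bound[OF b] unfolding gain_def profile_reward_def by simp
  then show ?thesis
    using norm_pos unfolding slack_def by (simp add: field_simps)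
qed

theorem best_response_smaller_discount:
  assumes br: "best_response A1 A2 mu r \<alpha>' fs gs" and "0 < \<alpha>" and "\<alpha> \<le> \<alpha>'"
  shows "best_response A1 A2 mu r \<alpha> fs gs"
proof -
  have "0 < \<alpha>'"
    using assms by simp
  have "0 \<le> bellman_residual \<alpha> (payoff \<alpha> fs) t b" if b: "b \<in> A1 t" for t b
  proof -
    have "slack t b / (\<alpha>' + rate) \<le> slack t b / (\<alpha> + rate)"
      using slack_nonneg[OF b] assms norm_pos by (intro divide_left_mono) auto
    moreover have "0 \<le> bellman_residual \<alpha>' (payoff \<alpha>' fs) t b"
      using br b best_response_iff_residual_nonneg[OF \<open>0 < \<alpha>'\<close> fs_stationary] by blast
    ultimately show ?thesis
      using bellman_residual_payoff[OF \<open>0 < \<alpha>'\<close> b] bellman_residual_payoff[OF \<open>0 < \<alpha>\<close> b] by simp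
  qed
  then show ?thesis
    using best_response_iff_residual_nonneg[OF \<open>0 < \<alpha>\<close> fs_stationary] by blast
qed

end

theorem theorem5:
  fixes A1 :: "'s::finite \<Rightarrow> 'a1 set" and A2 :: "'s \<Rightarrow> 'a2 set"
    and mu :: "'s \<Rightarrow> 's \<Rightarrow> 'a1 \<Rightarrow> 'a2 \<Rightarrow> real"
    and r1 r2 :: "'s \<Rightarrow> 'a1 \<Rightarrow> 'a2 \<Rightarrow> real"
    and fs :: "'s \<Rightarrow> 'a1 \<Rightarrow> real" and gs :: "'s \<Rightarrow> 'a2 \<Rightarrow> real"
    and \<alpha>h :: real and a1s :: "'s \<Rightarrow> 'a1" and a2s :: "'s \<Rightarrow> 'a2" and p :: "'s \<Rightarrow> real"
  assumes game: "ctsg A1 A2 mu"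
    and alpha_pos: "\<alpha>h > 0"
    and NE: "disc_NE A1 A2 mu r1 r2 \<alpha>h fs gs"
    and norm_pos: "mu_norm A1 A2 mu > 0"
    and M1: "\<forall>s. a1s s \<in> A1 s \<and> a2s s \<in> A2 s \<and> fs s (a1s s) = 1 \<and> gs s (a2s s) = 1"
    and M2: "(\<forall>s. p s \<ge> 0) \<and> (\<Sum>s\<in>UNIV. p s) = 1 \<and>
       (\<forall>s s'. genQ A1 A2 mu fs gs $ s $ s' =
                 mu_norm A1 A2 mu * (p s' - (if s = s' then 1 else 0)))"
    and M3a: "\<forall>s. \<forall>a1\<in>A1 s.
       (\<Sum>s'\<in>UNIV. p s' * r1 s' (a1s s') (a2s s')) \<ge>
       (\<Sum>s'\<in>UNIV. (mu s' s a1 (a2s s) / mu_norm A1 A2 mu + (if s = s' then 1 else 0))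
                      * r1 s' (a1s s') (a2s s'))"
    and M3b: "\<forall>s. \<forall>a2\<in>A2 s.
       (\<Sum>s'\<in>UNIV. p s' * r2 s' (a1s s') (a2s s')) \<ge>
       (\<Sum>s'\<in>UNIV. (mu s' s (a1s s) a2 / mu_norm A1 A2 mu + (if s = s' then 1 else 0))
                      * r2 s' (a1s s') (a2s s'))"
  shows "blackwell_NE A1 A2 mu r1 r2 fs gs"
proof -
  let ?mu = "\<lambda>s' s b a. mu s' s a b" and ?r2 = "\<lambda>s b a. r2 s a b"
  have fs: "stationary A1 fs" and gs: "stationary A2 gs"
    and br1: "best_response A1 A2 mu r1 \<alpha>h fs gs" and br2: "best_response A2 A1 ?mu ?r2 \<alpha>h gs fs"
    using NE unfolding disc_NE_iff_best_responses by auto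
  interpret player1: pure_restart_profile A1 A2 mu r1 gs fs a1s a2s p
    using game gs norm_pos fs M1 M2 M3a by unfold_locales auto
  interpret player2: pure_restart_profile A2 A1 ?mu ?r2 fs gs a2s a1s p
    using game fs norm_pos gs M1 M2 M3b
    by unfold_locales (auto simp: ctsg_swap[of A2 A1 mu] mu_norm_swap[of A2 A1 mu] genQ_swap[of A2 A1 mu])
  show ?thesis
    unfolding blackwell_NE_def disc_NE_iff_best_responses
    using alpha_pos fs gs player1.best_response_smaller_discount[OF br1]
      player2.best_response_smaller_discount[OF br2]
    by blast
qed

end
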